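(* Let $T$ be a finite nonempty set with a metric $\mathrm{dist}$, let $\Gamma:\mathbb{R}\to[0,1]$ be nondecreasing and subadditive with $\Gamma(x)=0$ iff $x=0$, and set $\gamma_{uv}=\Gamma(\mathrm{dist}(u,v))$ for $u,v\in T$. Let $\widehat\phi\in\mathbb{R}^{T}$, $\delta>0$, $$\mathcal{U}_{\mathrm{SB}}=\{\phi\in[0,1]^{T}:\ |\phi_v-\widehat\phi_v|\le\delta\ \ \forall v\in T,\ \ |\phi_v-\phi_u|\le\gamma_{vu}\ \ \forall u,v\in T\},$$ assumed nonempty, and let $\underline\phi_v=\max_{u\in T}\{\underline\phi^0_u-\gamma_{uv}\}$, $\bar\phi_v=\min_{u\in T}\{\bar\phi^0_u+\gamma_{vu}\}$ for $v\in T$, where $\underline\phi^0_u=\max\{0,\widehat\phi_u-\delta\}$ and $\bar\phi^0_u=\min\{1,\widehat\phi_u+\delta\}$. Then for all $u,v\in T$, $$P_{\{v,u\}}(\mathcal{U}_{\mathrm{SB}})=\{(\phi_v,\phi_u):\ \underline\phi_v\le\phi_v\le\bar\phi_v,\ \ \underline\phi_u\le\phi_u\le\bar\phi_u,\ \ |\phi_v-\phi_u|\le\gamma_{vu}\}.$$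
   Context: For $S\subseteq\mathbb{R}^{T}$ and $I\subseteq T$, $P_I(S)=\{\phi_I:\phi\in S\}$ denotes the projection of $S$ onto the coordinates in $I$. *)

theory Defs
  imports "HOL-Analysis.Analysis"
begin

definition proj :: "'a set \<Rightarrow> ('a \<Rightarrow> real) set \<Rightarrow> ('a \<Rightarrow> real) set" where
  "proj I S = (\<lambda>\<phi>. restrict \<phi> I) ` S"

definition U_SB :: "'a set \<Rightarrow> ('a \<Rightarrow> 'a \<Rightarrow> real) \<Rightarrow> (real \<Rightarrow> real) \<Rightarrow> ('a \<Rightarrow> real) \<Rightarrow> real
    \<Rightarrow> ('a \<Rightarrow> real) set" where
  "U_SB T d Gam phih \<delta> =
     {\<phi> \<in> extensional T. (\<forall>v\<in>T. 0 \<le> \<phi> v \<and> \<phi> v \<le> 1) \<and>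
        (\<forall>v\<in>T. \<bar>\<phi> v - phih v\<bar> \<le> \<delta>) \<and>
        (\<forall>u\<in>T. \<forall>v\<in>T. \<bar>\<phi> v - \<phi> u\<bar> \<le> Gam (d v u))}"

definition lo0 :: "('a \<Rightarrow> real) \<Rightarrow> real \<Rightarrow> 'a \<Rightarrow> real" where
  "lo0 phih \<delta> u = max 0 (phih u - \<delta>)"

definition up0 :: "('a \<Rightarrow> real) \<Rightarrow> real \<Rightarrow> 'a \<Rightarrow> real" where
  "up0 phih \<delta> u = min 1 (phih u + \<delta>)"

definition lo :: "'a set \<Rightarrow> ('a \<Rightarrow> 'a \<Rightarrow> real) \<Rightarrow> (real \<Rightarrow> real) \<Rightarrow> ('a \<Rightarrow> real) \<Rightarrow> real
    \<Rightarrow> 'a \<Rightarrow> real" where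
  "lo T d Gam phih \<delta> v = Max ((\<lambda>u. lo0 phih \<delta> u - Gam (d u v)) ` T)"

definition up :: "'a set \<Rightarrow> ('a \<Rightarrow> 'a \<Rightarrow> real) \<Rightarrow> (real \<Rightarrow> real) \<Rightarrow> ('a \<Rightarrow> real) \<Rightarrow> real
    \<Rightarrow> 'a \<Rightarrow> real" where
  "up T d Gam phih \<delta> v = Min ((\<lambda>u. up0 phih \<delta> u + Gam (d v u)) ` T)"

end

theory Submission
  imports Defs
begin

text \<open>Since \<Gamma> is monotone and subadditive with \<Gamma> 0 = 0, \<gamma> = \<Gamma> \<circ> dist is a pseudometric on T, and
  the result holds for the \<gamma>-Lipschitz functions between arbitrary bounds a and b.
  Each defining constraint of a point of the set propagates along the Lipschitz condition, so
  the envelopes are valid bounds on every coordinate. Conversely, a pair (p, q) at (v, u) meeting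
  the bounds extends to all of T by w \<mapsto> max (lo w) (max (p - \<gamma> v w) (q - \<gamma> u w)): as a
  maximum of \<gamma>-Lipschitz functions it is \<gamma>-Lipschitz, it dominates the lower bounds, and it stays
  below the upper bounds because p \<le> up v \<le> b w + \<gamma> w v. Nonemptiness of the set is needed
  only for lo w \<le> b w.\<close>

definition lipschitz_box ::
    "'a set \<Rightarrow> ('a \<Rightarrow> 'a \<Rightarrow> real) \<Rightarrow> ('a \<Rightarrow> real) \<Rightarrow> ('a \<Rightarrow> real) \<Rightarrow> ('a \<Rightarrow> real) set" where
  "lipschitz_box T g a b =
     {\<phi> \<in> extensional T. (\<forall>w\<in>T. a w \<le> \<phi> w \<and> \<phi> w \<le> b w) \<and>
        (\<forall>x\<in>T. \<forall>y\<in>T. \<bar>\<phi> y - \<phi> x\<bar> \<le> g y x)}"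

definition lower_envelope :: "'a set \<Rightarrow> ('a \<Rightarrow> 'a \<Rightarrow> real) \<Rightarrow> ('a \<Rightarrow> real) \<Rightarrow> 'a \<Rightarrow> real" where
  "lower_envelope T g a w = Max ((\<lambda>x. a x - g x w) ` T)"

definition upper_envelope :: "'a set \<Rightarrow> ('a \<Rightarrow> 'a \<Rightarrow> real) \<Rightarrow> ('a \<Rightarrow> real) \<Rightarrow> 'a \<Rightarrow> real" where
  "upper_envelope T g b w = Min ((\<lambda>x. b x + g w x) ` T)"

locale finite_pseudometric =
  fixes T :: "'a set" and g :: "'a \<Rightarrow> 'a \<Rightarrow> real"
  assumes finite: "finite T" and nonempty: "T \<noteq> {}"
    and g_refl: "x \<in> T \<Longrightarrow> g x x = 0"
    and g_sym: "x \<in> T \<Longrightarrow> y \<in> T \<Longrightarrow> g x y = g y x"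
    and g_triangle: "x \<in> T \<Longrightarrow> y \<in> T \<Longrightarrow> z \<in> T \<Longrightarrow> g x z \<le> g x y + g y z"
begin

lemma lower_envelope_ge: "x \<in> T \<Longrightarrow> a x - g x w \<le> lower_envelope T g a w"
  unfolding lower_envelope_def using finite by (intro Max_ge) auto

lemma lower_envelope_attained: obtains x where "x \<in> T" "lower_envelope T g a w = a x - g x w"
proof -
  have "lower_envelope T g a w \<in> (\<lambda>x. a x - g x w) ` T"
    unfolding lower_envelope_def using finite nonempty by (intro Max_in) auto
  then show ?thesis using that by blast
qed

lemma upper_envelope_le: "x \<in> T \<Longrightarrow> upper_envelope T g b w \<le> b x + g w x"
  unfolding upper_envelope_def using finite by (intro Min_le) auto

lemma upper_envelope_attained: obtains x where "x \<in> T" "upper_envelope T g b w = b x + g w x"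
proof -
  have "upper_envelope T g b w \<in> (\<lambda>x. b x + g w x) ` T"
    unfolding upper_envelope_def using finite nonempty by (intro Min_in) auto
  then show ?thesis using that by blast
qed

lemma lower_bound_le_lower_envelope: "w \<in> T \<Longrightarrow> a w \<le> lower_envelope T g a w"
  using lower_envelope_ge[of w a w] g_refl by simp

lemma lower_envelope_lipschitz:
  assumes "w \<in> T" "w' \<in> T"
  shows "lower_envelope T g a w \<le> lower_envelope T g a w' + g w w'"
proof -
  obtain x where x: "x \<in> T" "lower_envelope T g a w = a x - g x w"
    by (rule lower_envelope_attained)
  have "g x w' \<le> g x w + g w w'" using g_triangle x(1) assms by blast
  then show ?thesis using x lower_envelope_ge[OF x(1), of a w'] by linarith
qed

lemma lower_envelope_le_point:
  assumes "\<phi> \<in> lipschitz_box T g a b" "w \<in> T"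
  shows "lower_envelope T g a w \<le> \<phi> w"
proof -
  obtain x where x: "x \<in> T" "lower_envelope T g a w = a x - g x w"
    by (rule lower_envelope_attained)
  with assms have "a x \<le> \<phi> x" "\<phi> x - \<phi> w \<le> g x w"
    unfolding lipschitz_box_def by force+
  then show ?thesis using x by linarith
qed

lemma point_le_upper_envelope:
  assumes "\<phi> \<in> lipschitz_box T g a b" "w \<in> T"
  shows "\<phi> w \<le> upper_envelope T g b w"
proof -
  obtain x where x: "x \<in> T" "upper_envelope T g b w = b x + g w x"
    by (rule upper_envelope_attained)
  with assms have "\<phi> x \<le> b x" "\<phi> w - \<phi> x \<le> g w x"
    unfolding lipschitz_box_def by force+
  then show ?thesis using x by linarith
qed

lemma lower_envelope_le_upper_bound:
  assumes "lipschitz_box T g a b \<noteq> {}" "w \<in> T"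
  shows "lower_envelope T g a w \<le> b w"
proof -
  obtain \<phi> where \<phi>: "\<phi> \<in> lipschitz_box T g a b" using assms(1) by blast
  then have "\<phi> w \<le> b w" using assms(2) unfolding lipschitz_box_def by blast
  then show ?thesis using lower_envelope_le_point[OF \<phi> assms(2)] by linarith
qed

lemma pair_extends_to_lipschitz_box:
  assumes nonempty_box: "lipschitz_box T g a b \<noteq> {}" and "v \<in> T" "u \<in> T"
    and p: "lower_envelope T g a v \<le> p" "p \<le> upper_envelope T g b v"
    and q: "lower_envelope T g a u \<le> q" "q \<le> upper_envelope T g b u"
    and pq: "\<bar>p - q\<bar> \<le> g v u"
  obtains \<phi> where "\<phi> \<in> lipschitz_box T g a b" "\<phi> v = p" "\<phi> u = q"
proof -
  define f where "f w = max (lower_envelope T g a w) (max (p - g v w) (q - g u w))" for w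
  have "f v = p" "f u = q"
    using p q pq g_refl g_sym[of v u] \<open>v \<in> T\<close> \<open>u \<in> T\<close> unfolding f_def by auto
  have f_lower: "a w \<le> f w" if "w \<in> T" for w
    using lower_bound_le_lower_envelope[OF that, of a] unfolding f_def by simp
  have f_upper: "f w \<le> b w" if w: "w \<in> T" for w
  proof -
    have "p - g v w \<le> b w" "q - g u w \<le> b w"
      using p(2) q(2) upper_envelope_le[OF w, of b v] upper_envelope_le[OF w, of b u]
        g_sym[OF w \<open>v \<in> T\<close>] g_sym[OF w \<open>u \<in> T\<close>] by linarith+
    then show ?thesis
      using lower_envelope_le_upper_bound[OF nonempty_box w] unfolding f_def by simp
  qed
  have f_lipschitz: "f w \<le> f w' + g w w'" if w: "w \<in> T" "w' \<in> T" for w w'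
  proof -
    have "g v w' \<le> g v w + g w w'" "g u w' \<le> g u w + g w w'"
      using g_triangle w \<open>v \<in> T\<close> \<open>u \<in> T\<close> by blast+
    then show ?thesis using lower_envelope_lipschitz[OF w, of a] unfolding f_def by linarith
  qed
  have "\<bar>f y - f x\<bar> \<le> g y x" if "x \<in> T" "y \<in> T" for x y
    using f_lipschitz[OF that] f_lipschitz[OF that(2,1)] g_sym[OF that] by (simp add: abs_le_iff)
  then have "restrict f T \<in> lipschitz_box T g a b"
    unfolding lipschitz_box_def using f_lower f_upper by auto
  then show ?thesis
    using that \<open>f v = p\<close> \<open>f u = q\<close> \<open>v \<in> T\<close> \<open>u \<in> T\<close> by simp
qed

theorem proj_pair_lipschitz_box:
  assumes "lipschitz_box T g a b \<noteq> {}" "u \<in> T" "v \<in> T"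
  shows "proj {v, u} (lipschitz_box T g a b) =
    {\<psi> \<in> extensional {v, u}.
       lower_envelope T g a v \<le> \<psi> v \<and> \<psi> v \<le> upper_envelope T g b v \<and>
       lower_envelope T g a u \<le> \<psi> u \<and> \<psi> u \<le> upper_envelope T g b u \<and>
       \<bar>\<psi> v - \<psi> u\<bar> \<le> g v u}" (is "?P = ?R")
proof
  show "?P \<subseteq> ?R"
  proof
    fix \<psi> assume "\<psi> \<in> ?P"
    then obtain \<phi> where \<phi>: "\<phi> \<in> lipschitz_box T g a b" and \<psi>: "\<psi> = restrict \<phi> {v, u}"
      unfolding proj_def by blast
    have "\<bar>\<phi> v - \<phi> u\<bar> \<le> g v u" using \<phi> assms unfolding lipschitz_box_def by blast
    then show "\<psi> \<in> ?R"
      using \<psi> assms lower_envelope_le_point[OF \<phi>] point_le_upper_envelope[OF \<phi>] by auto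
  qed
next
  show "?R \<subseteq> ?P"
  proof
    fix \<psi> assume \<psi>: "\<psi> \<in> ?R"
    then obtain \<phi> where \<phi>: "\<phi> \<in> lipschitz_box T g a b" "\<phi> v = \<psi> v" "\<phi> u = \<psi> u"
      using pair_extends_to_lipschitz_box[OF assms(1,3,2)] by blast
    then have "\<psi> = restrict \<phi> {v, u}"
      using \<psi> by (auto simp: extensional_def)
    then show "\<psi> \<in> ?P" using \<phi>(1) unfolding proj_def by blast
  qed
qed

end

theorem proposition2p2:
  fixes T :: "'a set" and d :: "'a \<Rightarrow> 'a \<Rightarrow> real" and Gam :: "real \<Rightarrow> real"
    and phih :: "'a \<Rightarrow> real" and \<delta> :: real and u v :: 'a
  assumes "finite T" and "T \<noteq> {}"
    and d_zero: "\<And>x y. x \<in> T \<Longrightarrow> y \<in> T \<Longrightarrow> d x y = 0 \<longleftrightarrow> x = y"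
    and d_nonneg: "\<And>x y. x \<in> T \<Longrightarrow> y \<in> T \<Longrightarrow> 0 \<le> d x y"
    and d_sym: "\<And>x y. x \<in> T \<Longrightarrow> y \<in> T \<Longrightarrow> d x y = d y x"
    and d_tri: "\<And>x y z. x \<in> T \<Longrightarrow> y \<in> T \<Longrightarrow> z \<in> T \<Longrightarrow> d x z \<le> d x y + d y z"
    and Gam_range: "\<And>x. 0 \<le> x \<Longrightarrow> 0 \<le> Gam x \<and> Gam x \<le> 1"
    and Gam_mono: "\<And>x y. 0 \<le> x \<Longrightarrow> x \<le> y \<Longrightarrow> Gam x \<le> Gam y"
    and Gam_subadd: "\<And>x y. 0 \<le> x \<Longrightarrow> 0 \<le> y \<Longrightarrow> Gam (x + y) \<le> Gam x + Gam y"
    and Gam_zero: "\<And>x. 0 \<le> x \<Longrightarrow> Gam x = 0 \<longleftrightarrow> x = 0"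
    and "\<delta> > 0"
    and "U_SB T d Gam phih \<delta> \<noteq> {}"
    and "u \<in> T" and "v \<in> T"
  shows "proj {v, u} (U_SB T d Gam phih \<delta>) =
    {\<psi> \<in> extensional {v, u}.
       lo T d Gam phih \<delta> v \<le> \<psi> v \<and> \<psi> v \<le> up T d Gam phih \<delta> v \<and>
       lo T d Gam phih \<delta> u \<le> \<psi> u \<and> \<psi> u \<le> up T d Gam phih \<delta> u \<and>
       \<bar>\<psi> v - \<psi> u\<bar> \<le> Gam (d v u)}"
proof -
  define \<gamma> where "\<gamma> x y = Gam (d x y)" for x y
  have "finite_pseudometric T \<gamma>"
  proof
    show "\<gamma> x z \<le> \<gamma> x y + \<gamma> y z" if "x \<in> T" "y \<in> T" "z \<in> T" for x y z
      using Gam_mono[OF d_nonneg d_tri] Gam_subadd[OF d_nonneg d_nonneg] that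
      unfolding \<gamma>_def by (meson order_trans)
  qed (use assms Gam_zero[of 0] in \<open>auto simp: \<gamma>_def\<close>)
  moreover have "U_SB T d Gam phih \<delta> = lipschitz_box T \<gamma> (lo0 phih \<delta>) (up0 phih \<delta>)"
    by (auto simp: U_SB_def lipschitz_box_def lo0_def up0_def \<gamma>_def abs_le_iff)
  moreover have "lo T d Gam phih \<delta> = lower_envelope T \<gamma> (lo0 phih \<delta>)"
    and "up T d Gam phih \<delta> = upper_envelope T \<gamma> (up0 phih \<delta>)"
    by (auto simp: lo_def lower_envelope_def up_def upper_envelope_def \<gamma>_def)
  ultimately show ?thesis
    using finite_pseudometric.proj_pair_lipschitz_box[of T \<gamma>] assms(12-14) by (simp add: \<gamma>_def)
qed

end
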